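(* Let $X$ be a compact metric space whose metric $d$ is an ultrametric, i.e. $d(x,z)\le\max\{d(x,y),d(y,z)\}$ for all $x,y,z\in X$. If a continuous map $f\colon X\to X$ has the contractive shadowing property, then $CR(f)=\overline{Per(f)}$.
   Context: For $\delta>0$, a sequence $(x_i)_{i\ge0}$ is a $\delta$-pseudo orbit of $f$ if $d(f(x_i),x_{i+1})\le\delta$ for all $i\ge0$; it is $\epsilon$-shadowed by $x$ if $d(f^i(x),x_i)\le\epsilon$ for all $i\ge0$. $f$ has the contractive shadowing property if there are $0<L<1$ and $\delta_0>0$ such that for every $0<\delta\le\delta_0$, every $\delta$-pseudo orbit of $f$ is $L\delta$-shadowed by some point of $X$. A $\delta$-chain is a finite sequence $(x_i)_{i=0}^k$, $k\ge1$, with $d(f(x_i),x_{i+1})\le\delta$ for $0\le i\le k-1$; a $\delta$-cycle is a $\delta$-chain with $x_0=x_k$. $CR(f)$ is the set of $x\in X$ such that for every $\delta>0$ there is a $\delta$-cycle with $x_0=x_k=x$. $Per(f)=\bigcup_{i>0}\{x: f^i(x)=x\}$. *)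

theory Defs
  imports "HOL-Analysis.Analysis"
begin

text \<open>The space X is the whole (metric) type 'a; compactness is stated as compact UNIV.\<close>

definition ultrametric :: "'a::metric_space itself \<Rightarrow> bool" where
  "ultrametric _ \<longleftrightarrow> (\<forall>x y z::'a. dist x z \<le> max (dist x y) (dist y z))"

definition pseudo_orbit :: "('a::metric_space \<Rightarrow> 'a) \<Rightarrow> real \<Rightarrow> (nat \<Rightarrow> 'a) \<Rightarrow> bool" where
  "pseudo_orbit f \<delta> xs \<longleftrightarrow> (\<forall>i. dist (f (xs i)) (xs (Suc i)) \<le> \<delta>)"

definition shadows :: "('a::metric_space \<Rightarrow> 'a) \<Rightarrow> real \<Rightarrow> 'a \<Rightarrow> (nat \<Rightarrow> 'a) \<Rightarrow> bool" where
  "shadows f \<epsilon> x xs \<longleftrightarrow> (\<forall>i. dist ((f ^^ i) x) (xs i) \<le> \<epsilon>)"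

definition contractive_shadowing :: "('a::metric_space \<Rightarrow> 'a) \<Rightarrow> bool" where
  "contractive_shadowing f \<longleftrightarrow>
     (\<exists>L \<delta>0. 0 < L \<and> L < 1 \<and> 0 < \<delta>0 \<and>
        (\<forall>\<delta>. 0 < \<delta> \<and> \<delta> \<le> \<delta>0 \<longrightarrow>
           (\<forall>xs. pseudo_orbit f \<delta> xs \<longrightarrow> (\<exists>x. shadows f (L * \<delta>) x xs))))"

text \<open>A delta-chain (x_0,...,x_k), k \<ge> 1, represented by a function on nat restricted to {0..k}.\<close>
definition delta_chain :: "('a::metric_space \<Rightarrow> 'a) \<Rightarrow> real \<Rightarrow> (nat \<Rightarrow> 'a) \<Rightarrow> nat \<Rightarrow> bool" where
  "delta_chain f \<delta> xs k \<longleftrightarrow> 1 \<le> k \<and> (\<forall>i<k. dist (f (xs i)) (xs (Suc i)) \<le> \<delta>)"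

definition chain_recurrent_set :: "('a::metric_space \<Rightarrow> 'a) \<Rightarrow> 'a set" where
  "chain_recurrent_set f = {x. \<forall>\<delta>>0. \<exists>xs k. delta_chain f \<delta> xs k \<and> xs 0 = x \<and> xs k = x}"

definition periodic_points :: "('a \<Rightarrow> 'a) \<Rightarrow> 'a set" where
  "periodic_points f = (\<Union>i\<in>{i. i > 0}. {x. (f ^^ i) x = x})"

end

theory Submission
  imports Defs
begin

text \<open>Periodic points are chain recurrent, and the chain recurrent set of a continuous map is
closed; this gives one inclusion. Conversely, let \<open>x\<close> lie on a \<open>\<delta>\<close>-cycle of length \<open>k\<close>.
Repeating the cycle gives a \<open>\<delta>\<close>-pseudo orbit of period \<open>k\<close>; a point shadowing it lies within
\<open>L\<delta>\<close> of \<open>x\<close> and, by the ultrametric inequality, returns within \<open>L\<delta>\<close> of itself after \<open>k\<close> steps.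
Its orbit segment closes up to an \<open>L\<delta>\<close>-cycle, so iterating yields points within \<open>L\<delta>\<close> of \<open>x\<close>
whose \<open>k\<close>-step return distance is at most \<open>L\<^sup>n\<delta>\<close>. By compactness this return distance attains
the minimum \<open>0\<close> on the closed ball, which produces a periodic point \<open>L\<delta>\<close>-close to \<open>x\<close>.\<close>

lemma ultrametric_dist_le_max:
  fixes x y z :: "'a::metric_space"
  assumes "ultrametric TYPE('a)"
  shows "dist x z \<le> max (dist x y) (dist y z)"
  using assms unfolding ultrametric_def by blast

lemma continuous_on_funpow:
  fixes f :: "'a::topological_space \<Rightarrow> 'a"
  assumes "continuous_on UNIV f"
  shows "continuous_on UNIV (f ^^ n)"
proof (induction n)
  case (Suc n)
  have "continuous_on UNIV (f \<circ> (f ^^ n))"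
    by (rule continuous_on_compose[OF Suc]) (use assms in \<open>auto intro: continuous_on_subset\<close>)
  then show ?case
    by simp
qed simp

lemma delta_cycle_pseudo_orbit:
  assumes "delta_chain f \<delta> xs k" "xs k = xs 0"
  shows "pseudo_orbit f \<delta> (\<lambda>i. xs (i mod k))"
  unfolding pseudo_orbit_def
proof
  fix i
  have k: "1 \<le> k" and step: "\<And>i. i < k \<Longrightarrow> dist (f (xs i)) (xs (Suc i)) \<le> \<delta>"
    using assms(1) unfolding delta_chain_def by auto
  have "xs (Suc i mod k) = xs (Suc (i mod k))"
    using assms(2) by (simp add: mod_Suc)
  then show "dist (f (xs (i mod k))) (xs (Suc i mod k)) \<le> \<delta>"
    using step[of "i mod k"] k by simp
qed

lemma orbit_segment_delta_chain:
  assumes "1 \<le> k" "dist ((f ^^ k) z) z \<le> \<delta>"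
  shows "delta_chain f \<delta> (\<lambda>j. if j = k then z else (f ^^ j) z) k"
  using assms order_trans[OF zero_le_dist assms(2)] unfolding delta_chain_def by auto

lemma periodic_points_subset_chain_recurrent_set:
  "periodic_points f \<subseteq> chain_recurrent_set f"
proof
  fix x assume "x \<in> periodic_points f"
  then obtain k where "0 < k" "(f ^^ k) x = x"
    unfolding periodic_points_def by auto
  define xs where "xs = (\<lambda>j. if j = k then x else (f ^^ j) x)"
  have "delta_chain f \<delta> xs k" if "0 < \<delta>" for \<delta>
    using orbit_segment_delta_chain[of k f x \<delta>] \<open>0 < k\<close> \<open>(f ^^ k) x = x\<close> that
    unfolding xs_def by simp
  moreover have "xs 0 = x" "xs k = x"
    using \<open>0 < k\<close> unfolding xs_def by simp_all
  ultimately show "x \<in> chain_recurrent_set f"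
    unfolding chain_recurrent_set_def by blast
qed

lemma delta_chain_perturb:
  assumes "delta_chain f \<delta> ys k"
    and "\<And>i. i < k \<Longrightarrow> dist (f (xs i)) (f (ys i)) \<le> a"
    and "\<And>i. i < k \<Longrightarrow> dist (ys (Suc i)) (xs (Suc i)) \<le> b"
  shows "delta_chain f (a + \<delta> + b) xs k"
  unfolding delta_chain_def
proof (intro conjI allI impI)
  show "1 \<le> k" using assms(1) unfolding delta_chain_def by simp
  fix i assume "i < k"
  have "dist (f (xs i)) (xs (Suc i)) \<le> dist (f (xs i)) (f (ys i)) + dist (f (ys i)) (xs (Suc i))"
    by (rule dist_triangle)
  also have "\<dots> \<le> dist (f (xs i)) (f (ys i)) + (dist (f (ys i)) (ys (Suc i)) + dist (ys (Suc i)) (xs (Suc i)))"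
    by (intro add_left_mono dist_triangle)
  also have "\<dots> \<le> a + (\<delta> + b)"
    using assms \<open>i < k\<close> unfolding delta_chain_def by (intro add_mono) simp_all
  finally show "dist (f (xs i)) (xs (Suc i)) \<le> a + \<delta> + b"
    by (simp add: add.assoc)
qed

text \<open>A cycle through a nearby chain recurrent point \<open>y\<close> is moved to \<open>x\<close> by replacing its two
endpoints; continuity of \<open>f\<close> at \<open>x\<close> controls the first step.\<close>

lemma closed_chain_recurrent_set:
  fixes f :: "'a::metric_space \<Rightarrow> 'a"
  assumes "continuous_on UNIV f"
  shows "closed (chain_recurrent_set f)"
proof -
  have "x \<in> chain_recurrent_set f" if x: "x \<in> closure (chain_recurrent_set f)" for x
    unfolding chain_recurrent_set_def
  proof (intro CollectI allI impI)
    fix \<delta> :: real assume "0 < \<delta>"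
    then have "0 < \<delta> / 3"
      by simp
    moreover have "\<forall>e>0. \<exists>d>0. \<forall>y. dist y x < d \<longrightarrow> dist (f y) (f x) < e"
      using assms unfolding continuous_on_iff by simp
    ultimately obtain \<eta> where "0 < \<eta>" and \<eta>: "\<And>y. dist y x < \<eta> \<Longrightarrow> dist (f y) (f x) < \<delta> / 3"
      by meson
    then have "0 < min \<eta> (\<delta> / 3)"
      using \<open>0 < \<delta> / 3\<close> by simp
    then obtain y where y: "y \<in> chain_recurrent_set f" "dist y x < min \<eta> (\<delta> / 3)"
      using x unfolding closure_approachable by blast
    then obtain ys k where ys: "delta_chain f (\<delta> / 3) ys k" "ys 0 = y" "ys k = y"
      using \<open>0 < \<delta> / 3\<close> unfolding chain_recurrent_set_def by blast
    define xs where "xs = ys(0 := x, k := x)"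
    have close: "xs i = ys i \<or> (xs i = x \<and> ys i = y)" for i
      using ys unfolding xs_def by auto
    have "delta_chain f (\<delta> / 3 + \<delta> / 3 + \<delta> / 3) xs k"
    proof (rule delta_chain_perturb[OF ys(1)])
      have "dist (f x) (f y) \<le> \<delta> / 3"
        using \<eta>[of y] y(2) by (simp add: dist_commute)
      then show "dist (f (xs i)) (f (ys i)) \<le> \<delta> / 3" for i
        using close[of i] \<open>0 < \<delta> / 3\<close> by auto
      show "dist (ys (Suc i)) (xs (Suc i)) \<le> \<delta> / 3" for i
        using close[of "Suc i"] y(2) \<open>0 < \<delta> / 3\<close> by auto
    qed
    moreover have "xs 0 = x" "xs k = x"
      unfolding xs_def by auto
    ultimately show "\<exists>xs k. delta_chain f \<delta> xs k \<and> xs 0 = x \<and> xs k = x"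
      by (intro exI[of _ xs] exI[of _ k]) simp
  qed
  then have "closure (chain_recurrent_set f) \<subseteq> chain_recurrent_set f"
    by blast
  then show ?thesis
    by (simp add: closure_subset_eq)
qed

lemma shadowing_point_returns:
  fixes f :: "'a::metric_space \<Rightarrow> 'a"
  assumes "ultrametric TYPE('a)" "shadows f \<epsilon> z ys" "ys k = ys 0"
  shows "dist ((f ^^ k) z) z \<le> \<epsilon>"
proof -
  have "dist ((f ^^ k) z) (ys k) \<le> \<epsilon>" "dist ((f ^^ 0) z) (ys 0) \<le> \<epsilon>"
    using assms(2) unfolding shadows_def by blast+
  then have "dist ((f ^^ k) z) (ys 0) \<le> \<epsilon>" "dist (ys 0) z \<le> \<epsilon>"
    using assms(3) by (simp_all add: dist_commute)
  then show ?thesis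
    using ultrametric_dist_le_max[OF assms(1), of "(f ^^ k) z" z "ys 0"] by simp
qed

lemma shadowed_cycle_returns:
  fixes f :: "'a::metric_space \<Rightarrow> 'a"
  assumes "ultrametric TYPE('a)"
    and shadow: "\<And>\<delta> xs. 0 < \<delta> \<Longrightarrow> \<delta> \<le> \<delta>0 \<Longrightarrow> pseudo_orbit f \<delta> xs \<Longrightarrow> \<exists>z. shadows f (L * \<delta>) z xs"
    and cycle: "delta_chain f \<delta> xs k" "xs k = xs 0"
    and "0 < \<delta>" "\<delta> \<le> \<delta>0"
  shows "\<exists>z. dist z (xs 0) \<le> L * \<delta> \<and> dist ((f ^^ k) z) z \<le> L * \<delta>"
proof -
  obtain z where z: "shadows f (L * \<delta>) z (\<lambda>i. xs (i mod k))"
    using shadow[OF \<open>0 < \<delta>\<close> \<open>\<delta> \<le> \<delta>0\<close> delta_cycle_pseudo_orbit[OF cycle]] by blast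
  have "dist ((f ^^ 0) z) (xs (0 mod k)) \<le> L * \<delta>"
    using z unfolding shadows_def by blast
  then have "dist z (xs 0) \<le> L * \<delta>"
    by simp
  moreover have "dist ((f ^^ k) z) z \<le> L * \<delta>"
    using shadowing_point_returns[OF assms(1) z] by simp
  ultimately show ?thesis by blast
qed

lemma almost_periodic_points_near_cycle:
  fixes f :: "'a::metric_space \<Rightarrow> 'a"
  assumes um: "ultrametric TYPE('a)" and L: "0 < L" "L < 1"
    and shadow: "\<And>\<delta> xs. 0 < \<delta> \<Longrightarrow> \<delta> \<le> \<delta>0 \<Longrightarrow> pseudo_orbit f \<delta> xs \<Longrightarrow> \<exists>z. shadows f (L * \<delta>) z xs"
    and cycle: "delta_chain f \<delta> xs k" "xs k = xs 0"
    and \<delta>: "0 < \<delta>" "\<delta> \<le> \<delta>0"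
  shows "\<exists>z. dist z (xs 0) \<le> L * \<delta> \<and> dist ((f ^^ k) z) z \<le> L ^ Suc n * \<delta>"
proof (induction n)
  case 0
  show ?case
    using shadowed_cycle_returns[OF um shadow cycle \<delta>] by simp
next
  case (Suc n)
  then obtain z where z: "dist z (xs 0) \<le> L * \<delta>" "dist ((f ^^ k) z) z \<le> L ^ Suc n * \<delta>"
    by blast
  define \<eta> where "\<eta> = L ^ Suc n * \<delta>"
  have "L ^ Suc n \<le> 1"
    using L by (intro power_le_one) auto
  then have "\<eta> \<le> \<delta>"
    unfolding \<eta>_def by (rule mult_left_le_one_le[rotated 2]) (use L \<delta> in auto)
  moreover have "0 < \<eta>"
    using L \<delta> unfolding \<eta>_def by simp
  ultimately have \<eta>: "0 < \<eta>" "\<eta> \<le> \<delta>" "\<eta> \<le> \<delta>0"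
    using \<delta> by auto
  have "1 \<le> k"
    using cycle(1) unfolding delta_chain_def by simp
  then obtain y where y: "dist y z \<le> L * \<eta>" "dist ((f ^^ k) y) y \<le> L * \<eta>"
    using shadowed_cycle_returns[OF um shadow orbit_segment_delta_chain _ \<eta>(1,3), of k z]
      z(2) \<eta>_def by auto
  have "L * \<eta> \<le> L * \<delta>"
    using L \<eta> by simp
  then have "dist y (xs 0) \<le> L * \<delta>"
    using ultrametric_dist_le_max[OF um, of y "xs 0" z] y(1) z(1) by simp
  moreover have "L * \<eta> = L ^ Suc (Suc n) * \<delta>"
    unfolding \<eta>_def by simp
  ultimately show ?case
    using y(2) by auto
qed

lemma periodic_point_near_cycle:
  fixes f :: "'a::metric_space \<Rightarrow> 'a"
  assumes "compact (UNIV :: 'a set)" "continuous_on UNIV f"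
    and um: "ultrametric TYPE('a)" and L: "0 < L" "L < 1"
    and shadow: "\<And>\<delta> xs. 0 < \<delta> \<Longrightarrow> \<delta> \<le> \<delta>0 \<Longrightarrow> pseudo_orbit f \<delta> xs \<Longrightarrow> \<exists>z. shadows f (L * \<delta>) z xs"
    and cycle: "delta_chain f \<delta> xs k" "xs k = xs 0"
    and \<delta>: "0 < \<delta>" "\<delta> \<le> \<delta>0"
  shows "\<exists>p. (f ^^ k) p = p \<and> dist p (xs 0) \<le> L * \<delta>"
proof -
  define B where "B = cball (xs 0) (L * \<delta>)"
  define g where "g z = dist ((f ^^ k) z) z" for z
  have "compact B"
    using compact_Int_closed[OF assms(1) closed_cball] unfolding B_def by simp
  moreover have "B \<noteq> {}"
    using L \<delta> unfolding B_def by (simp add: not_less)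
  moreover have "continuous_on B g"
    unfolding g_def using continuous_on_funpow[OF assms(2)]
    by (intro continuous_intros) (auto intro: continuous_on_subset)
  ultimately obtain p where "p \<in> B" and p_min: "\<forall>z\<in>B. g p \<le> g z"
    by (meson continuous_attains_inf)
  have "g p = 0"
  proof (rule ccontr)
    assume "g p \<noteq> 0"
    then have "0 < g p / \<delta>"
      using \<delta> unfolding g_def by simp
    then obtain n where "L ^ n < g p / \<delta>"
      using real_arch_pow_inv[OF _ L(2)] by blast
    then have "L ^ n * \<delta> < g p"
      using \<delta> by (simp add: pos_less_divide_eq)
    moreover have "L ^ Suc n * \<delta> \<le> L ^ n * \<delta>"
      using L \<delta> by (intro mult_right_mono power_decreasing) auto
    moreover obtain z where "dist z (xs 0) \<le> L * \<delta>" "g z \<le> L ^ Suc n * \<delta>"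
      using almost_periodic_points_near_cycle[OF um L shadow cycle \<delta>] unfolding g_def by blast
    moreover have "g p \<le> g z"
      using p_min \<open>dist z (xs 0) \<le> L * \<delta>\<close> unfolding B_def by (simp add: dist_commute)
    ultimately show False
      by linarith
  qed
  then have "(f ^^ k) p = p" "dist p (xs 0) \<le> L * \<delta>"
    using \<open>p \<in> B\<close> unfolding B_def g_def by (simp_all add: dist_commute)
  then show ?thesis
    by blast
qed

lemma chain_recurrent_set_subset_closure_periodic_points:
  fixes f :: "'a::metric_space \<Rightarrow> 'a"
  assumes "compact (UNIV :: 'a set)" "ultrametric TYPE('a)" "continuous_on UNIV f"
    and "contractive_shadowing f"
  shows "chain_recurrent_set f \<subseteq> closure (periodic_points f)"
proof
  fix x assume x: "x \<in> chain_recurrent_set f"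
  obtain L \<delta>0 where L: "0 < L" "L < 1" "0 < \<delta>0"
    and shadow: "\<And>\<delta> xs. 0 < \<delta> \<Longrightarrow> \<delta> \<le> \<delta>0 \<Longrightarrow> pseudo_orbit f \<delta> xs \<Longrightarrow> \<exists>z. shadows f (L * \<delta>) z xs"
    using assms(4) unfolding contractive_shadowing_def by blast
  show "x \<in> closure (periodic_points f)"
    unfolding closure_approachable
  proof (intro allI impI)
    fix \<epsilon> :: real assume "0 < \<epsilon>"
    define \<delta> where "\<delta> = min \<delta>0 \<epsilon>"
    have \<delta>: "0 < \<delta>" "\<delta> \<le> \<delta>0"
      using L \<open>0 < \<epsilon>\<close> unfolding \<delta>_def by auto
    obtain xs k where cycle: "delta_chain f \<delta> xs k" "xs 0 = x" "xs k = x"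
      using x \<delta> unfolding chain_recurrent_set_def by blast
    then obtain p where p: "(f ^^ k) p = p" "dist p x \<le> L * \<delta>"
      using periodic_point_near_cycle[OF assms(1,3,2) L(1,2) shadow cycle(1) _ \<delta>] by auto
    have "p \<in> periodic_points f"
      using p(1) cycle(1) unfolding periodic_points_def delta_chain_def by (intro UN_I[of k]) auto
    moreover have "L * \<delta> < \<delta>"
      using mult_strict_right_mono[of L 1 \<delta>] L \<delta> by simp
    with p(2) have "dist p x < \<epsilon>"
      unfolding \<delta>_def by linarith
    ultimately show "\<exists>p\<in>periodic_points f. dist p x < \<epsilon>"
      by blast
  qed
qed

theorem theorem1p5:
  fixes f :: "'a::metric_space \<Rightarrow> 'a"
  assumes "compact (UNIV :: 'a set)"
    and "ultrametric TYPE('a)"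
    and "continuous_on UNIV f"
    and "contractive_shadowing f"
  shows "chain_recurrent_set f = closure (periodic_points f)"
proof
  show "chain_recurrent_set f \<subseteq> closure (periodic_points f)"
    using chain_recurrent_set_subset_closure_periodic_points[OF assms] .
  show "closure (periodic_points f) \<subseteq> chain_recurrent_set f"
    using closure_minimal[OF periodic_points_subset_chain_recurrent_set
        closed_chain_recurrent_set[OF assms(3)]] .
qed

end
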